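(* Every caterpillar with maximum degree at most $5$ is odd prime.
   Context: All graphs are finite and simple. A graph $G$ of order $N$ is odd prime if there is a bijection $\ell:V(G)\to\{1,3,\ldots,2N-1\}$ with $\gcd(\ell(u),\ell(v))=1$ for every edge $uv$. A caterpillar is a tree containing a path $v_1,\ldots,v_n$ (the spine) such that every vertex not on the spine is a leaf adjacent to one of the interior spine vertices $v_2,\ldots,v_{n-1}$. *)

theory Defs
  imports Main "HOL-Computational_Algebra.Primes"
begin

definition simple_graph :: "'a set \<Rightarrow> ('a \<Rightarrow> 'a \<Rightarrow> bool) \<Rightarrow> bool" where
  "simple_graph V E \<longleftrightarrow> finite V \<and> (\<forall>u v. E u v \<longrightarrow> u \<in> V \<and> v \<in> V)
     \<and> (\<forall>u v. E u v \<longrightarrow> E v u) \<and> (\<forall>u. \<not> E u u)"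

definition degree :: "'a set \<Rightarrow> ('a \<Rightarrow> 'a \<Rightarrow> bool) \<Rightarrow> 'a \<Rightarrow> nat" where
  "degree V E v = card {u \<in> V. E v u}"

definition is_path :: "'a set \<Rightarrow> ('a \<Rightarrow> 'a \<Rightarrow> bool) \<Rightarrow> 'a list \<Rightarrow> bool" where
  "is_path V E xs \<longleftrightarrow> xs \<noteq> [] \<and> distinct xs \<and> set xs \<subseteq> V
     \<and> (\<forall>i. Suc i < length xs \<longrightarrow> E (xs ! i) (xs ! Suc i))"

definition is_cycle :: "'a set \<Rightarrow> ('a \<Rightarrow> 'a \<Rightarrow> bool) \<Rightarrow> 'a list \<Rightarrow> bool" where
  "is_cycle V E xs \<longleftrightarrow> is_path V E xs \<and> length xs \<ge> 3 \<and> E (last xs) (hd xs)"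

definition connected_graph :: "'a set \<Rightarrow> ('a \<Rightarrow> 'a \<Rightarrow> bool) \<Rightarrow> bool" where
  "connected_graph V E \<longleftrightarrow>
     (\<forall>u\<in>V. \<forall>v\<in>V. \<exists>xs. is_path V E xs \<and> hd xs = u \<and> last xs = v)"

definition is_tree :: "'a set \<Rightarrow> ('a \<Rightarrow> 'a \<Rightarrow> bool) \<Rightarrow> bool" where
  "is_tree V E \<longleftrightarrow> simple_graph V E \<and> V \<noteq> {} \<and> connected_graph V E
     \<and> (\<nexists>xs. is_cycle V E xs)"

text \<open>Caterpillar: a tree with a path (spine) v_1..v_n such that every vertex not
on the spine is a leaf adjacent to an interior spine vertex v_2..v_{n-1}
(0-based indices 1..n-2).\<close>
definition caterpillar :: "'a set \<Rightarrow> ('a \<Rightarrow> 'a \<Rightarrow> bool) \<Rightarrow> bool" where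
  "caterpillar V E \<longleftrightarrow> is_tree V E \<and>
     (\<exists>sp. is_path V E sp \<and>
        (\<forall>x \<in> V - set sp. degree V E x = 1 \<and>
           (\<exists>i. 0 < i \<and> Suc i < length sp \<and> E x (sp ! i))))"

definition odd_prime :: "'a set \<Rightarrow> ('a \<Rightarrow> 'a \<Rightarrow> bool) \<Rightarrow> bool" where
  "odd_prime V E \<longleftrightarrow> (\<exists>l :: 'a \<Rightarrow> nat.
     bij_betw l V {k. odd k \<and> k < 2 * card V} \<and>
     (\<forall>u v. E u v \<longrightarrow> coprime (l u) (l v)))"

end

theory Submission
  imports Defs
begin

text \<open>Since gcd(2p+1, 2q+1) is odd and divides 2(q-p), the labels 2p+1 and 2q+1 are coprime
whenever the gap |q-p| is 1, 2 or 4, or is 3 with 3 not dividing 2 min(p,q) + 1. So it suffices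
to put the vertices into the positions 0, ..., N-1 such that every edge has such a good gap.
Walk along the spine and give each spine vertex, together with its leaves, a block of consecutive
positions. A leaf hangs at an interior spine vertex, which has two spine neighbours, so degree
at most 5 leaves at most 3 leaves per block; hence leaves are within distance 3 of their spine
vertex, and consecutive spine vertices are within distance 4 if the spine vertex usually takes
the second-to-last slot of its block. The two configurations where this produces a bad gap 3
are repaired by moving the spine vertex to the last slot, and a finite case check on the residue
of the previous spine position modulo 3 shows that all gaps are then good.\<close>

section \<open>Coprime odd labels\<close>

definition good_gap :: "nat \<Rightarrow> nat \<Rightarrow> bool" where
  "good_gap p q \<longleftrightarrow>
     (let d = max p q - min p q in d \<in> {1, 2, 4} \<or> d = 3 \<and> min p q mod 3 \<noteq> 1)"

lemma good_gap_commute: "good_gap p q \<longleftrightarrow> good_gap q p"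
  unfolding good_gap_def by (simp add: max.commute min.commute)

lemma coprime_odd_add_double_iff:
  fixes a d :: nat
  shows "coprime (2 * a + 1) (2 * (a + d) + 1) \<longleftrightarrow> coprime (2 * a + 1) d"
proof -
  have "2 * (a + d) + 1 = (2 * a + 1) + 2 * d"
    by simp
  then have "coprime (2 * a + 1) (2 * (a + d) + 1) \<longleftrightarrow> coprime (2 * a + 1) (2 * d)"
    by (simp only: coprime_iff_gcd_eq_1 gcd_add2)
  also have "\<dots> \<longleftrightarrow> coprime (2 * a + 1) d"
    by simp
  finally show ?thesis .
qed

lemma good_gap_coprime:
  assumes "good_gap p q"
  shows "coprime (2 * p + 1) (2 * q + 1)"
proof -
  have *: "coprime (2 * a + 1) (2 * (a + d) + 1)"
    if "d \<in> {1, 2, 4} \<or> d = 3 \<and> a mod 3 \<noteq> 1" for a d :: nat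
  proof -
    have "coprime (2 * a + 1) d"
    proof (cases "d = 3")
      case True
      with that have "a mod 3 \<noteq> 1"
        by simp
      then have "\<not> 3 dvd 2 * a + 1"
        by presburger
      then show ?thesis
        using True by (simp add: prime_imp_coprime coprime_commute)
    next
      case False
      with that have "d \<in> {2 ^ 0, 2 ^ 1, 2 ^ 2}"
        by simp
      then obtain e where "d = 2 ^ e"
        by blast
      then show ?thesis
        by simp
    qed
    then show ?thesis
      by (simp only: coprime_odd_add_double_iff)
  qed
  show ?thesis
  proof (cases "p \<le> q")
    case True
    then show ?thesis
      using *[of "q - p" p] assms by (simp add: good_gap_def Let_def max_def min_def)
  next
    case False
    then show ?thesis
      using *[of "p - q" q] assms by (simp add: good_gap_def Let_def max_def min_def coprime_commute)
  qed
qed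

lemma bij_betw_odd_below: "bij_betw (\<lambda>p. 2 * p + 1) {..<N :: nat} {k. odd k \<and> k < 2 * N}"
  unfolding bij_betw_def inj_on_def
proof (intro conjI ballI impI equalityI subsetI)
  fix k :: nat
  assume "k \<in> {k. odd k \<and> k < 2 * N}"
  then show "k \<in> (\<lambda>p. 2 * p + 1) ` {..<N}"
    by (auto elim!: oddE)
qed auto

lemma odd_prime_if_good_gap_positions:
  assumes "finite V" "inj_on pos V" "pos ` V \<subseteq> {..<card V}"
    and "\<And>u v. E u v \<Longrightarrow> good_gap (pos u) (pos v)"
  shows "odd_prime V E"
proof -
  have "pos ` V = {..<card V}"
    using assms(1-3) by (intro card_subset_eq) (simp_all add: card_image)
  with assms(2) have "bij_betw pos V {..<card V}"
    by (simp add: bij_betw_def)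
  then have "bij_betw (\<lambda>v. 2 * pos v + 1) V {k. odd k \<and> k < 2 * card V}"
    using bij_betw_trans[OF _ bij_betw_odd_below] by (simp add: comp_def)
  then show ?thesis
    unfolding odd_prime_def using assms(4) good_gap_coprime by blast
qed

section \<open>Block layout\<close>

lemma good_gap_add_mod:
  "good_gap (P + x) (P + y) \<longleftrightarrow> good_gap (P mod 3 + x) (P mod 3 + y)"
  unfolding good_gap_def by (simp add: mod_add_left_eq max_def min_def)

text \<open>Block i holds spine vertex i and its k i leaves in the k i + 1 positions starting at
block_start k i. The spine vertex takes slot spine_offset k i of its block, and the leaves fill
the other slots in order.\<close>

definition block_start :: "(nat \<Rightarrow> nat) \<Rightarrow> nat \<Rightarrow> nat" where
  "block_start k i = i + (\<Sum>j<i. k j)"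

definition leaf_slot :: "nat \<Rightarrow> nat \<Rightarrow> nat" where
  "leaf_slot s j = (if j < s then j else Suc j)"

lemma leaf_slot_le: "j < k \<Longrightarrow> leaf_slot s j \<le> k"
  by (simp add: leaf_slot_def)

lemma leaf_slot_neq: "leaf_slot s j \<noteq> s"
  by (simp add: leaf_slot_def)

lemma leaf_slot_inj: "leaf_slot s j = leaf_slot s j' \<Longrightarrow> j = j'"
  by (auto simp: leaf_slot_def split: if_splits)

lemma block_start_0 [simp]: "block_start k 0 = 0"
  by (simp add: block_start_def)

lemma block_start_Suc: "block_start k (Suc i) = block_start k i + k i + 1"
  by (simp add: block_start_def)

lemma block_start_less:
  assumes "i < i'" "a \<le> k i"
  shows "block_start k i + a < block_start k i'"
  using assms
proof (induction i')
  case (Suc i')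
  then show ?case
    by (cases "i = i'") (auto simp: block_start_Suc)
qed simp

lemma block_start_add_inj:
  assumes "block_start k i + a = block_start k i' + a'" "a \<le> k i" "a' \<le> k i'"
  shows "i = i'"
  using assms block_start_less[of i i' a k] block_start_less[of i' i a' k]
  by (metis le_add1 linorder_neqE_nat not_less)

lemma all_less_numeral:
  "(\<forall>j<numeral n. Q j) \<longleftrightarrow> Q (pred_numeral n) \<and> (\<forall>j<pred_numeral n. Q j)"
  "(\<forall>j<Suc m. Q j) \<longleftrightarrow> Q m \<and> (\<forall>j<m. Q j)"
  by (auto simp: numeral_eq_Suc less_Suc_eq)

text \<open>The slot of the next spine vertex in its block: r is the distance from the previous spine
vertex to the start of the block, m the residue of the previous spine position modulo 3, and k
the number of leaves in the block. The default k - 1 is the second-to-last slot (truncated to 0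
for a block without leaves).\<close>

definition next_offset :: "nat \<Rightarrow> nat \<Rightarrow> nat \<Rightarrow> nat" where
  "next_offset r m k =
     (if r = 1 \<and> m = 1 \<and> k = 3 then 3 else if r = 2 \<and> m = 1 \<and> k = 2 then 2 else k - 1)"

lemma next_offset_good:
  fixes P :: nat
  assumes "r \<in> {1, 2}" "k \<le> 3"
  defines "s \<equiv> next_offset r (P mod 3) k"
  shows "k - 1 \<le> s \<and> s \<le> k \<and> good_gap P (P + r + s)
    \<and> (\<forall>j<k. good_gap (P + r + s) (P + r + leaf_slot s j))"
proof -
  define m where "m = P mod 3"
  have m: "m \<in> {0, 1, 2}" and k: "k \<in> {0, 1, 2, 3}"
    using assms(2) unfolding m_def by auto
  have shift: "good_gap (P + x) (P + y) \<longleftrightarrow> good_gap (m + x) (m + y)" for x y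
    unfolding m_def by (rule good_gap_add_mod)
  have "k - 1 \<le> s \<and> s \<le> k \<and> good_gap (P + 0) (P + (r + s))
    \<and> (\<forall>j<k. good_gap (P + (r + s)) (P + (r + leaf_slot s j)))"
    unfolding shift using m k assms(1) unfolding s_def m_def[symmetric]
    by (elim insertE emptyE)
      (simp_all add: next_offset_def leaf_slot_def good_gap_def all_less_numeral)
  then show ?thesis
    by (simp add: add.assoc)
qed

fun spine_offset :: "(nat \<Rightarrow> nat) \<Rightarrow> nat \<Rightarrow> nat" where
  "spine_offset k 0 = k 0 - 1"
| "spine_offset k (Suc i) =
     next_offset (k i + 1 - spine_offset k i) ((block_start k i + spine_offset k i) mod 3) (k (Suc i))"

context
  fixes k :: "nat \<Rightarrow> nat"
  assumes k_le_3: "\<And>i. k i \<le> 3"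
begin

lemma spine_offset_bounds: "k i - 1 \<le> spine_offset k i \<and> spine_offset k i \<le> k i"
proof (induction i)
  case (Suc i)
  then have "k i + 1 - spine_offset k i \<in> {1, 2}"
    by auto
  then show ?case
    using next_offset_good k_le_3 by simp
qed simp

lemma block_Suc_good_gaps:
  fixes i :: nat
  defines "s \<equiv> block_start k (Suc i) + spine_offset k (Suc i)"
  shows "good_gap (block_start k i + spine_offset k i) s
    \<and> (\<forall>j<k (Suc i). good_gap s (block_start k (Suc i) + leaf_slot (spine_offset k (Suc i)) j))"
proof -
  define P where "P = block_start k i + spine_offset k i"
  define r where "r = k i + 1 - spine_offset k i"
  have r: "r \<in> {1, 2}" and start: "block_start k (Suc i) = P + r"
    using spine_offset_bounds[of i] unfolding r_def P_def block_start_Suc by auto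
  have "spine_offset k (Suc i) = next_offset r (P mod 3) (k (Suc i))"
    unfolding r_def P_def by simp
  then show ?thesis
    using next_offset_good[OF r k_le_3] unfolding s_def start P_def[symmetric] by simp
qed

lemma spine_gap:
  "good_gap (block_start k i + spine_offset k i) (block_start k (Suc i) + spine_offset k (Suc i))"
  using block_Suc_good_gaps by blast

lemma leaf_gap:
  assumes "j < k i"
  shows "good_gap (block_start k i + spine_offset k i)
    (block_start k i + leaf_slot (spine_offset k i) j)"
proof (cases i)
  case 0
  have "k 0 \<in> {0, 1, 2, 3}"
    using k_le_3[of 0] by auto
  then have "\<forall>j<k 0. good_gap (k 0 - 1) (leaf_slot (k 0 - 1) j)"
    by (elim insertE emptyE) (simp_all add: leaf_slot_def good_gap_def all_less_numeral)
  then show ?thesis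
    using 0 assms by simp
next
  case (Suc i')
  then show ?thesis
    using block_Suc_good_gaps[of i'] assms by simp
qed

end

section \<open>Caterpillars\<close>

lemma path_chord_cycle:
  assumes path: "is_path V E xs" and "i + 2 \<le> j" "j < length xs" and "E (xs ! j) (xs ! i)"
  shows "is_cycle V E (take (Suc (j - i)) (drop i xs))"
proof -
  define ys where "ys = take (Suc (j - i)) (drop i xs)"
  have len: "length ys = Suc (j - i)"
    unfolding ys_def using assms by simp
  have nth: "ys ! m = xs ! (i + m)" if "m \<le> j - i" for m
    unfolding ys_def using that assms by simp
  have "distinct ys" "set ys \<subseteq> V"
    unfolding ys_def using path unfolding is_path_def
    by (auto dest: in_set_takeD in_set_dropD)
  moreover have "E (ys ! m) (ys ! Suc m)" if "Suc m < length ys" for m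
    using path that len nth[of m] nth[of "Suc m"] assms(3) unfolding is_path_def by auto
  moreover have "hd ys = xs ! i" "last ys = xs ! j"
  proof -
    have "ys \<noteq> []"
      using len by auto
    then show "hd ys = xs ! i" "last ys = xs ! j"
      using nth[of 0] nth[of "j - i"] len assms(2) by (simp_all add: hd_conv_nth last_conv_nth)
  qed
  ultimately show ?thesis
    unfolding is_cycle_def is_path_def ys_def[symmetric] using len assms(2,4) by auto
qed

lemma tree_path_edge_consecutive:
  assumes "is_tree V E" "is_path V E xs" "i < length xs" "j < length xs" "E (xs ! i) (xs ! j)"
  shows "j = Suc i \<or> i = Suc j"
proof -
  have sym: "E v u" if "E u v" for u v
    using assms(1) that unfolding is_tree_def simple_graph_def by blast
  have "i \<noteq> j"
    using assms(1,5) unfolding is_tree_def simple_graph_def by auto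
  have no_chord: False if "a + 2 \<le> b" "b < length xs" "E (xs ! b) (xs ! a)" for a b
    using path_chord_cycle[OF assms(2) that] assms(1) unfolding is_tree_def by blast
  show ?thesis
  proof (rule ccontr)
    assume "\<not> ?thesis"
    with \<open>i \<noteq> j\<close> consider "i + 2 \<le> j" | "j + 2 \<le> i"
      by linarith
    then show False
      using no_chord assms(3-5) sym by cases blast+
  qed
qed

locale caterpillar_spine =
  fixes V :: "'a set" and E :: "'a \<Rightarrow> 'a \<Rightarrow> bool" and sp :: "'a list"
  assumes tree: "is_tree V E"
    and spine: "is_path V E sp"
    and off_spine: "\<And>x. x \<in> V - set sp \<Longrightarrow>
      degree V E x = 1 \<and> (\<exists>i. 0 < i \<and> Suc i < length sp \<and> E x (sp ! i))"
    and degree_le_5: "\<And>v. v \<in> V \<Longrightarrow> degree V E v \<le> 5"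
begin

lemma finite_V: "finite V"
  and edge_in_V: "E u v \<Longrightarrow> u \<in> V \<and> v \<in> V"
  and edge_sym: "E u v \<Longrightarrow> E v u"
  using tree unfolding is_tree_def simple_graph_def by auto

lemma distinct_spine: "distinct sp"
  and set_spine_subset: "set sp \<subseteq> V"
  and spine_edge: "Suc i < length sp \<Longrightarrow> E (sp ! i) (sp ! Suc i)"
  using spine unfolding is_path_def by auto

definition parent :: "'a \<Rightarrow> nat" where
  "parent x = (SOME i. 0 < i \<and> Suc i < length sp \<and> E x (sp ! i))"

lemma parent:
  assumes "x \<in> V - set sp"
  shows "0 < parent x \<and> Suc (parent x) < length sp \<and> E x (sp ! parent x)"
proof -
  have "\<exists>i. 0 < i \<and> Suc i < length sp \<and> E x (sp ! i)"
    using off_spine[OF assms] by blast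
  then show ?thesis
    unfolding parent_def by (rule someI_ex)
qed

lemma leaf_neighbour:
  assumes "x \<in> V - set sp" "E x v"
  shows "v = sp ! parent x"
proof -
  have "card {w \<in> V. E x w} = 1"
    using off_spine[OF assms(1)] unfolding degree_def by simp
  moreover have "v \<in> {w \<in> V. E x w}" "sp ! parent x \<in> {w \<in> V. E x w}"
    using assms parent[OF assms(1)] edge_in_V by auto
  ultimately show ?thesis
    by (metis card_1_singletonE singletonD)
qed

definition leaves :: "nat \<Rightarrow> 'a set" where
  "leaves i = {x \<in> V - set sp. parent x = i}"

definition leaf_count :: "nat \<Rightarrow> nat" where
  "leaf_count i = card (leaves i)"

lemma finite_leaves: "finite (leaves i)"
  unfolding leaves_def using finite_V by simp

lemma leaf_count_le_3: "leaf_count i \<le> 3"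
proof (cases "leaves i = {}")
  case False
  then obtain x where "x \<in> leaves i"
    by blast
  then have i: "0 < i" "Suc i < length sp"
    using parent unfolding leaves_def by auto
  define a b where "a = sp ! (i - 1)" and "b = sp ! Suc i"
  have "a \<noteq> b" "a \<notin> leaves i" "b \<notin> leaves i"
    unfolding a_def b_def leaves_def using i distinct_spine by (auto simp: nth_eq_iff_index_eq)
  then have "leaf_count i + 2 = card (leaves i \<union> {a, b})"
    unfolding leaf_count_def using finite_leaves by simp
  also have "\<dots> \<le> card {u \<in> V. E (sp ! i) u}"
  proof (intro card_mono subsetI)
    fix u
    assume "u \<in> leaves i \<union> {a, b}"
    then consider "u \<in> leaves i" | "u = a" | "u = b"
      by blast
    then have "E (sp ! i) u"
    proof cases
      case 1
      then show ?thesis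
        using parent[of u] edge_sym unfolding leaves_def by auto
    next
      case 2
      then show ?thesis
        using spine_edge[of "i - 1"] edge_sym i unfolding a_def by simp
    next
      case 3
      then show ?thesis
        using spine_edge[of i] i unfolding b_def by simp
    qed
    then show "u \<in> {u \<in> V. E (sp ! i) u}"
      using edge_in_V by blast
  qed (use finite_V in simp)
  also have "\<dots> \<le> 5"
    using degree_le_5 set_spine_subset nth_mem[OF Suc_lessD[OF i(2)]] unfolding degree_def
    by blast
  finally show ?thesis
    by simp
qed (simp add: leaf_count_def)

definition leaf_rank :: "nat \<Rightarrow> 'a \<Rightarrow> nat" where
  "leaf_rank i = (SOME f. bij_betw f (leaves i) {..<leaf_count i})"

lemma bij_leaf_rank: "bij_betw (leaf_rank i) (leaves i) {..<leaf_count i}"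
proof -
  have "\<exists>f. bij_betw f (leaves i) {..<leaf_count i}"
    using ex_bij_betw_finite_nat[OF finite_leaves] unfolding leaf_count_def lessThan_atLeast0 .
  then show ?thesis
    unfolding leaf_rank_def by (rule someI_ex)
qed

definition spine_index :: "'a \<Rightarrow> nat" where
  "spine_index = the_inv_into {..<length sp} ((!) sp)"

lemma spine_index_nth: "i < length sp \<Longrightarrow> spine_index (sp ! i) = i"
  unfolding spine_index_def using distinct_spine
  by (simp add: the_inv_into_f_f inj_on_nth)

lemma nth_spine_index: "v \<in> set sp \<Longrightarrow> spine_index v < length sp \<and> sp ! spine_index v = v"
  by (metis in_set_conv_nth spine_index_nth)

definition block :: "'a \<Rightarrow> nat" where
  "block v = (if v \<in> set sp then spine_index v else parent v)"

definition slot :: "'a \<Rightarrow> nat" where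
  "slot v = (if v \<in> set sp then spine_offset leaf_count (block v)
     else leaf_slot (spine_offset leaf_count (block v)) (leaf_rank (block v) v))"

definition position :: "'a \<Rightarrow> nat" where
  "position v = block_start leaf_count (block v) + slot v"

lemma leaf_rank_less: "x \<in> V - set sp \<Longrightarrow> leaf_rank (parent x) x < leaf_count (parent x)"
  using bij_betw_apply[OF bij_leaf_rank] unfolding leaves_def by auto

lemma block_less: "v \<in> V \<Longrightarrow> block v < length sp"
  unfolding block_def using nth_spine_index parent[of v] by auto

lemma slot_le: "v \<in> V \<Longrightarrow> slot v \<le> leaf_count (block v)"
  unfolding slot_def block_def
  using spine_offset_bounds[of leaf_count, OF leaf_count_le_3] leaf_slot_le leaf_rank_less by auto

lemma block_slot_inj:
  assumes "u \<in> V" "v \<in> V" "block u = block v" "slot u = slot v"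
  shows "u = v"
proof (cases "u \<in> set sp"; cases "v \<in> set sp")
  assume "u \<in> set sp" "v \<in> set sp"
  then show ?thesis
    using assms(3) nth_spine_index unfolding block_def by metis
next
  assume "u \<notin> set sp" "v \<notin> set sp"
  then have "parent u = parent v" "leaf_rank (parent u) u = leaf_rank (parent u) v"
    using assms(3,4) leaf_slot_inj unfolding block_def slot_def by auto
  moreover have "u \<in> leaves (parent u)" "v \<in> leaves (parent u)"
    using assms(1,2) \<open>u \<notin> set sp\<close> \<open>v \<notin> set sp\<close> \<open>parent u = parent v\<close>
    unfolding leaves_def by auto
  ultimately show ?thesis
    using bij_leaf_rank unfolding bij_betw_def inj_on_def by blast
qed (use assms(3,4) leaf_slot_neq leaf_slot_neq[symmetric] in \<open>auto simp: slot_def\<close>)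

lemma inj_on_position: "inj_on position V"
proof (rule inj_onI)
  fix u v
  assume uv: "u \<in> V" "v \<in> V" "position u = position v"
  then have "block u = block v"
    using block_start_add_inj slot_le unfolding position_def by metis
  with uv show "u = v"
    using block_slot_inj unfolding position_def by simp
qed

lemma card_V: "card V = block_start leaf_count (length sp)"
proof -
  have "V \<subseteq> set sp \<union> (\<Union>i<length sp. leaves i)"
  proof
    fix x
    assume "x \<in> V"
    show "x \<in> set sp \<union> (\<Union>i<length sp. leaves i)"
    proof (cases "x \<in> set sp")
      case False
      with \<open>x \<in> V\<close> have "x \<in> leaves (parent x)" "parent x < length sp"
        using parent[of x] unfolding leaves_def by auto
      then show ?thesis
        by blast
    qed simp
  qed
  moreover have "set sp \<union> (\<Union>i<length sp. leaves i) \<subseteq> V"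
    using set_spine_subset unfolding leaves_def by blast
  ultimately have "V = set sp \<union> (\<Union>i<length sp. leaves i)"
    by (rule subset_antisym)
  then have "card V = card (set sp \<union> (\<Union>i<length sp. leaves i))"
    by (rule arg_cong)
  also have "\<dots> = card (set sp) + card (\<Union>i<length sp. leaves i)"
    by (rule card_Un_disjoint) (simp_all add: finite_leaves, auto simp: leaves_def)
  also have "card (\<Union>i<length sp. leaves i) = (\<Sum>i<length sp. leaf_count i)"
    unfolding leaf_count_def
    by (rule card_UN_disjoint) (simp_all add: finite_leaves, auto simp: leaves_def)
  finally show ?thesis
    using distinct_card[OF distinct_spine] by (simp add: block_start_def)
qed

lemma position_less: "v \<in> V \<Longrightarrow> position v < card V"
  unfolding position_def card_V by (intro block_start_less block_less slot_le)

lemma position_spine: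
  "i < length sp \<Longrightarrow> position (sp ! i) = block_start leaf_count i + spine_offset leaf_count i"
  unfolding position_def slot_def block_def by (simp add: spine_index_nth)

lemma position_leaf: "x \<in> V - set sp \<Longrightarrow> position x =
    block_start leaf_count (parent x) + leaf_slot (spine_offset leaf_count (parent x)) (leaf_rank (parent x) x)"
  unfolding position_def slot_def block_def by simp

lemma leaf_position_good_gap:
  assumes "x \<in> V - set sp" "E x v"
  shows "good_gap (position x) (position v)"
  using leaf_gap[of leaf_count, OF leaf_count_le_3 leaf_rank_less[OF assms(1)]] parent[OF assms(1)]
  unfolding leaf_neighbour[OF assms] position_leaf[OF assms(1)]
  by (simp add: good_gap_commute position_spine)

lemma position_good_gap:
  assumes "E u v"
  shows "good_gap (position u) (position v)"
proof (cases "u \<in> set sp \<and> v \<in> set sp")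
  case True
  then obtain i j where "i < length sp" "j < length sp" "u = sp ! i" "v = sp ! j"
    by (metis in_set_conv_nth)
  moreover have "j = Suc i \<or> i = Suc j"
    using tree_path_edge_consecutive[OF tree spine] calculation assms by blast
  ultimately show ?thesis
    using spine_gap[of leaf_count, OF leaf_count_le_3] good_gap_commute position_spine by auto
next
  case False
  then show ?thesis
    using leaf_position_good_gap edge_in_V edge_sym assms good_gap_commute by blast
qed

end

theorem theorem4p4:
  fixes V :: "'a set" and E :: "'a \<Rightarrow> 'a \<Rightarrow> bool"
  assumes "caterpillar V E"
    and "\<forall>v\<in>V. degree V E v \<le> 5"
  shows "odd_prime V E"
proof -
  obtain sp where "caterpillar_spine V E sp"
    using assms unfolding caterpillar_def caterpillar_spine_def by blast
  then interpret caterpillar_spine V E sp .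
  show ?thesis
    using finite_V inj_on_position position_less position_good_gap
    by (intro odd_prime_if_good_gap_positions) auto
qed

end
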